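(* For each integer $n\geq 3$, the Johnson graph $J(n,2)$ satisfies $\operatorname{tww}(J(n,2))\leq 2(n-3)$.
   Context: All graphs are finite and simple. The Johnson graph $J(n,2)$ has vertex set the 2-element subsets of $\{1,\dots,n\}$, two vertices $S,S'$ being adjacent iff $|S\cap S'|=1$. A trigraph is a graph whose edges are each colored red or black; a graph is viewed as a trigraph with all edges black; the red degree of a vertex is the number of red edges incident to it. For a partition $\mathcal{P}$ of $V(G)$, the quotient trigraph $G/\mathcal{P}$ has vertex set $\mathcal{P}$; two distinct parts $U,W$ are joined by a black edge if every pair $\{u,w\}$ with $u\in U,w\in W$ is a black edge of $G$, are non-adjacent if no such pair is an edge, and are joined by a red edge otherwise. A contraction sequence of an $N$-vertex trigraph $G$ is a sequence $\mathcal{P}_N,\dots,\mathcal{P}_1$ of partitions of $V(G)$ where $\mathcal{P}_N$ is the partition into singletons and each $\mathcal{P}_i$ arises from $\mathcal{P}_{i+1}$ by merging two parts; its width is the maximum red degree over all $G/\mathcal{P}_i$, and the twin-width $\operatorname{tww}(G)$ is the minimum width of a contraction sequence. *)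

theory Defs
  imports Main
begin

text \<open>A graph is given by a finite vertex set V and a symmetric irreflexive
adjacency relation E (all edges black). A partition of V is a set of parts.\<close>

definition red_edge :: "('a \<Rightarrow> 'a \<Rightarrow> bool) \<Rightarrow> 'a set \<Rightarrow> 'a set \<Rightarrow> bool" where
  "red_edge E U W \<longleftrightarrow>
     \<not> (\<forall>u\<in>U. \<forall>w\<in>W. E u w) \<and> \<not> (\<forall>u\<in>U. \<forall>w\<in>W. \<not> E u w)"

definition red_degree :: "('a \<Rightarrow> 'a \<Rightarrow> bool) \<Rightarrow> 'a set set \<Rightarrow> 'a set \<Rightarrow> nat" where
  "red_degree E P U = card {W \<in> P. W \<noteq> U \<and> red_edge E U W}"

definition singleton_partition :: "'a set \<Rightarrow> 'a set set" where
  "singleton_partition V = (\<lambda>v. {v}) ` V"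

definition merge_step :: "'a set set \<Rightarrow> 'a set set \<Rightarrow> bool" where
  "merge_step P Q \<longleftrightarrow>
     (\<exists>A\<in>P. \<exists>B\<in>P. A \<noteq> B \<and> Q = insert (A \<union> B) (P - {A, B}))"

text \<open>A contraction sequence P_N, ..., P_1 with N = card V, indexed by i.\<close>
definition contraction_sequence :: "'a set \<Rightarrow> (nat \<Rightarrow> 'a set set) \<Rightarrow> bool" where
  "contraction_sequence V P \<longleftrightarrow>
     P (card V) = singleton_partition V \<and>
     (\<forall>i. 1 \<le> i \<and> i < card V \<longrightarrow> merge_step (P (Suc i)) (P i))"

definition seq_width_le ::
  "('a \<Rightarrow> 'a \<Rightarrow> bool) \<Rightarrow> 'a set \<Rightarrow> (nat \<Rightarrow> 'a set set) \<Rightarrow> nat \<Rightarrow> bool" where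
  "seq_width_le E V P d \<longleftrightarrow>
     (\<forall>i\<in>{1..card V}. \<forall>U\<in>P i. red_degree E (P i) U \<le> d)"

definition twin_width :: "'a set \<Rightarrow> ('a \<Rightarrow> 'a \<Rightarrow> bool) \<Rightarrow> nat" where
  "twin_width V E = (LEAST d. \<exists>P. contraction_sequence V P \<and> seq_width_le E V P d)"

definition johnson2_vertices :: "nat \<Rightarrow> nat set set" where
  "johnson2_vertices n = {S. S \<subseteq> {1..n} \<and> card S = 2}"

definition johnson2_adj :: "nat set \<Rightarrow> nat set \<Rightarrow> bool" where
  "johnson2_adj S S' \<longleftrightarrow> card (S \<inter> S') = 1"

end

theory Submission
  imports Defs "HOL-Library.Disjoint_Sets"
begin

text \<open>Write the vertices of \<open>J(n,2)\<close> as pairs \<open>{a,b}\<close> with \<open>a < b\<close>. For \<open>1 \<le> k < m\<close>, the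
  partition at stage \<open>(k,m)\<close> consists of a core (the pairs inside \<open>{1..k}\<close>, and \<open>{1,2}\<close>),
  for every \<open>b > k\<close> a star of the pairs \<open>{a,b}\<close> with \<open>a \<le> k\<close>, together with \<open>{k+1,b}\<close> if
  \<open>b \<le> m\<close>, and singletons for all other pairs. Raising \<open>m\<close> merges the singleton
  \<open>{k+1,m+1}\<close> into the star of \<open>m+1\<close>; at \<open>m = n\<close>, merging the star of \<open>k+1\<close> into the
  core gives stage \<open>(k+1,k+2)\<close>. This leads from the discrete stage \<open>(1,2)\<close> to the one-part
  stage \<open>(n,n+1)\<close>. Throughout, red edges are scarce: the core sees only stars, a singleton
  only stars of index in \<open>k+2..m\<close>, and the star of \<open>x\<close> sees the core, the other stars of
  index at least \<open>max (k+1) 3\<close> and, if \<open>k+2 \<le> x \<le> m\<close>, the singletons \<open>{k+1,d}\<close> with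
  \<open>d > m\<close>. Each of these counts is at most \<open>2(n-3)\<close>.\<close>

section \<open>Contraction sequences from bounded merges\<close>

definition max_red_degree_le :: "('a \<Rightarrow> 'a \<Rightarrow> bool) \<Rightarrow> 'a set set \<Rightarrow> nat \<Rightarrow> bool" where
  "max_red_degree_le E P d \<longleftrightarrow> (\<forall>U\<in>P. red_degree E P U \<le> d)"

definition bounded_merge :: "('a \<Rightarrow> 'a \<Rightarrow> bool) \<Rightarrow> nat \<Rightarrow> 'a set set \<Rightarrow> 'a set set \<Rightarrow> bool" where
  "bounded_merge E d P Q \<longleftrightarrow> merge_step P Q \<and> max_red_degree_le E Q d"

lemma max_red_degree_le_singleton_partition:
  "max_red_degree_le E (singleton_partition V) d"
proof -
  have "red_degree E (singleton_partition V) U = 0" if "U \<in> singleton_partition V" for U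
  proof -
    have "{W \<in> singleton_partition V. W \<noteq> U \<and> red_edge E U W} = {}"
      using that unfolding singleton_partition_def red_edge_def by auto
    then show ?thesis
      unfolding red_degree_def by (simp only: card.empty)
  qed
  then show ?thesis
    unfolding max_red_degree_le_def by simp
qed

lemma merge_step_partition_on:
  assumes P: "partition_on V P" "finite V" and "merge_step P Q"
  shows "partition_on V Q" "card Q = card P - 1"
proof -
  obtain A B where AB: "A \<in> P" "B \<in> P" "A \<noteq> B" and Q: "Q = insert (A \<union> B) (P - {A, B})"
    using \<open>merge_step P Q\<close> unfolding merge_step_def by blast
  have "finite P"
    using P by (rule finite_elements[rotated])
  have disj: "C \<inter> D = {}" if "C \<in> P" "D \<in> P" "C \<noteq> D" for C D
    using partition_onD2[OF P(1)] that by (rule disjointD)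
  have "A \<noteq> {}" "B \<noteq> {}"
    using AB partition_onD3[OF P(1)] by auto
  have "A \<union> B \<notin> P"
  proof
    assume "A \<union> B \<in> P"
    moreover have "A \<union> B \<noteq> A"
      using disj[OF AB] \<open>B \<noteq> {}\<close> by blast
    ultimately have "(A \<union> B) \<inter> A = {}"
      using disj AB(1) by blast
    then show False
      using \<open>A \<noteq> {}\<close> by blast
  qed
  have "card (P - {A, B}) = card P - 2"
    using AB \<open>finite P\<close> by (simp add: card_Diff_subset)
  moreover have "card P \<ge> 2"
    using AB \<open>finite P\<close> card_mono[of P "{A, B}"] by simp
  ultimately show "card Q = card P - 1"
    using \<open>A \<union> B \<notin> P\<close> \<open>finite P\<close> unfolding Q by simp
  have merged_disj: "(A \<union> B) \<inter> D = {}" if "D \<in> P - {A, B}" for D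
    using that disj AB by blast
  show "partition_on V Q"
  proof (rule partition_onI)
    have "\<Union>Q = \<Union>P"
      using AB unfolding Q by auto
    then show "\<Union>Q = V"
      using partition_onD1[OF P(1)] by simp
    show "{} \<notin> Q"
      using partition_onD3[OF P(1)] \<open>A \<noteq> {}\<close> unfolding Q by simp
    fix C D assume "C \<in> Q" "D \<in> Q" "C \<noteq> D"
    then consider "C = A \<union> B" "D \<in> P - {A, B}" | "D = A \<union> B" "C \<in> P - {A, B}"
      | "C \<in> P" "D \<in> P"
      unfolding Q by auto
    then show "disjnt C D"
      using disj merged_disj \<open>C \<noteq> D\<close> by cases (auto simp: disjnt_def Int_commute)
  qed
qed

lemma contraction_prefix_if_bounded_merges:
  assumes "finite V" and "(bounded_merge E d)\<^sup>*\<^sup>* (singleton_partition V) Q"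
  shows "\<exists>F. F (card V) = singleton_partition V \<and> F (card Q) = Q \<and>
    partition_on V Q \<and> card Q \<le> card V \<and>
    (\<forall>i. card Q \<le> i \<and> i < card V \<longrightarrow> merge_step (F (Suc i)) (F i)) \<and>
    (\<forall>i. card Q \<le> i \<and> i \<le> card V \<longrightarrow> max_red_degree_le E (F i) d)"
  using assms(2)
proof (induction rule: rtranclp_induct)
  case base
  have "card (singleton_partition V) = card V"
    unfolding singleton_partition_def by (simp add: card_image)
  then show ?case
    using max_red_degree_le_singleton_partition partition_on_singletons[of V]
    by (intro exI[of _ "\<lambda>_. singleton_partition V"]) (auto simp: singleton_partition_def)
next
  case (step Q Q')
  then obtain F where F: "F (card V) = singleton_partition V" "F (card Q) = Q"
    "partition_on V Q" "card Q \<le> card V"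
    "\<forall>i. card Q \<le> i \<and> i < card V \<longrightarrow> merge_step (F (Suc i)) (F i)"
    "\<forall>i. card Q \<le> i \<and> i \<le> card V \<longrightarrow> max_red_degree_le E (F i) d"
    by blast
  have merge: "merge_step Q Q'" and bounded: "max_red_degree_le E Q' d"
    using step.hyps(2) unfolding bounded_merge_def by auto
  have Q': "partition_on V Q'" "card Q' = card Q - 1"
    using merge_step_partition_on[OF F(3) \<open>finite V\<close> merge] by auto
  have "Q \<noteq> {}" "finite Q"
    using merge finite_elements[OF \<open>finite V\<close> F(3)] unfolding merge_step_def by auto
  then have card_Q: "card Q = Suc (card Q')"
    using Q'(2) by (simp add: card_gt_0_iff)
  define G where "G = F(card Q' := Q')"
  show ?case
  proof (intro exI[of _ G] conjI allI impI)
    show "G (card V) = singleton_partition V" "card Q' \<le> card V"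
      using F(1,4) card_Q by (simp_all add: G_def)
    show "G (card Q') = Q'" "partition_on V Q'"
      using Q'(1) by (simp_all add: G_def)
  next
    fix i assume i: "card Q' \<le> i \<and> i < card V"
    show "merge_step (G (Suc i)) (G i)"
    proof (cases "i = card Q'")
      case True
      then show ?thesis using F(2) merge card_Q by (simp add: G_def)
    next
      case False
      then show ?thesis using F(5) i card_Q by (simp add: G_def)
    qed
  next
    fix i assume "card Q' \<le> i \<and> i \<le> card V"
    then show "max_red_degree_le E (G i) d"
      using F(6) bounded card_Q by (cases "i = card Q'") (simp_all add: G_def)
  qed
qed

lemma twin_width_le_if_bounded_merges:
  assumes "finite V" and "(bounded_merge E d)\<^sup>*\<^sup>* (singleton_partition V) {V}"
  shows "twin_width V E \<le> d"
proof -
  obtain F where "F (card V) = singleton_partition V"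
    "\<forall>i. 1 \<le> i \<and> i < card V \<longrightarrow> merge_step (F (Suc i)) (F i)"
    "\<forall>i. 1 \<le> i \<and> i \<le> card V \<longrightarrow> max_red_degree_le E (F i) d"
    using contraction_prefix_if_bounded_merges[OF assms] by auto
  then have "contraction_sequence V F \<and> seq_width_le E V F d"
    unfolding contraction_sequence_def seq_width_le_def max_red_degree_le_def by auto
  then show ?thesis
    unfolding twin_width_def by (blast intro: Least_le)
qed

section \<open>Partitions into the fibres of a labelling\<close>

definition label_class :: "('a \<Rightarrow> 'b) \<Rightarrow> 'a set \<Rightarrow> 'b \<Rightarrow> 'a set" where
  "label_class f V l = {v \<in> V. f v = l}"

definition label_classes :: "('a \<Rightarrow> 'b) \<Rightarrow> 'a set \<Rightarrow> 'a set set" where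
  "label_classes f V = label_class f V ` f ` V"

lemma label_class_eq_iff:
  assumes "l \<in> f ` V"
  shows "label_class f V l = label_class f V l' \<longleftrightarrow> l = l'"
  using assms unfolding label_class_def by blast

lemma label_classes_cong:
  "(\<And>v. v \<in> V \<Longrightarrow> f v = g v) \<Longrightarrow> label_classes f V = label_classes g V"
  unfolding label_classes_def label_class_def by (auto simp: image_def)

lemma label_classes_inj_on:
  "inj_on f V \<Longrightarrow> label_classes f V = singleton_partition V"
  unfolding label_classes_def label_class_def singleton_partition_def inj_on_def by auto

lemma label_classes_const:
  "V \<noteq> {} \<Longrightarrow> (\<And>v. v \<in> V \<Longrightarrow> f v = c) \<Longrightarrow> label_classes f V = {V}"
  unfolding label_classes_def label_class_def by auto

lemma merge_step_relabel:
  assumes l1: "l1 \<in> f ` V" and l2: "l2 \<in> f ` V" and "l1 \<noteq> l2"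
    and g: "\<And>v. v \<in> V \<Longrightarrow> g v = (if f v = l1 then l2 else f v)"
  shows "merge_step (label_classes f V) (label_classes g V)"
proof -
  let ?A = "label_class f V l1" and ?B = "label_class f V l2"
  have merged: "label_class g V l2 = ?A \<union> ?B"
    using \<open>l1 \<noteq> l2\<close> unfolding label_class_def by (auto simp: g split: if_splits)
  have unchanged: "label_class g V l = label_class f V l" if "l \<noteq> l1" "l \<noteq> l2" for l
    using that unfolding label_class_def by (auto simp: g split: if_splits)
  have class_g: "label_class g V (g v) =
      (if f v = l1 \<or> f v = l2 then ?A \<union> ?B else label_class f V (f v))" if "v \<in> V" for v
    using g[OF that] merged unchanged[of "f v"] by auto
  have "label_classes g V = insert (?A \<union> ?B) (label_classes f V - {?A, ?B})"
  proof (intro equalityI subsetI)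
    fix C assume "C \<in> label_classes g V"
    then obtain v where "v \<in> V" "C = label_class g V (g v)"
      unfolding label_classes_def by auto
    then show "C \<in> insert (?A \<union> ?B) (label_classes f V - {?A, ?B})"
      using class_g label_class_eq_iff[of "f v" f V] unfolding label_classes_def by auto
  next
    fix C assume C: "C \<in> insert (?A \<union> ?B) (label_classes f V - {?A, ?B})"
    obtain w where "w \<in> V" "f w = l2"
      using l2 by auto
    then have "?A \<union> ?B \<in> label_classes g V"
      using class_g[of w] unfolding label_classes_def by auto
    moreover have "C \<in> label_classes g V" if C_old: "C \<in> label_classes f V - {?A, ?B}"
    proof -
      obtain v where v: "v \<in> V" "C = label_class f V (f v)"
        using C_old unfolding label_classes_def by auto
      moreover have "f v \<noteq> l1" "f v \<noteq> l2"
        using C_old v label_class_eq_iff[of "f v" f V] by auto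
      ultimately show ?thesis
        using class_g[of v] unfolding label_classes_def by auto
    qed
    ultimately show "C \<in> label_classes g V"
      using C by (metis insertE)
  qed
  moreover have "?A \<in> label_classes f V" "?B \<in> label_classes f V" "?A \<noteq> ?B"
    using l1 l2 label_class_eq_iff[OF l1] \<open>l1 \<noteq> l2\<close> unfolding label_classes_def by auto
  ultimately show ?thesis
    unfolding merge_step_def by blast
qed

lemma red_degree_label_class_le:
  assumes "finite N"
    and red: "\<And>u u' w w'. \<lbrakk>u \<in> V; u' \<in> V; w \<in> V; w' \<in> V; f u = l0; f u' = l0; f w' = f w;
      f w \<noteq> l0; E u w; \<not> E u' w'\<rbrakk> \<Longrightarrow> f w \<in> N"
  shows "red_degree E (label_classes f V) (label_class f V l0) \<le> card N"
proof -
  let ?U = "label_class f V l0"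
  have "{W \<in> label_classes f V. W \<noteq> ?U \<and> red_edge E ?U W} \<subseteq> label_class f V ` N"
  proof
    fix W assume W: "W \<in> {W \<in> label_classes f V. W \<noteq> ?U \<and> red_edge E ?U W}"
    then obtain t where t: "t \<in> V" "W = label_class f V (f t)"
      unfolding label_classes_def by auto
    obtain u w u' w' where "u \<in> ?U" "w \<in> W" "E u w" "u' \<in> ?U" "w' \<in> W" "\<not> E u' w'"
      using W unfolding red_edge_def by blast
    moreover have "f t \<noteq> l0"
      using W t by auto
    ultimately have "f t \<in> N"
      using red[of u u' w w'] t unfolding label_class_def by auto
    then show "W \<in> label_class f V ` N"
      using t by simp
  qed
  then have "red_degree E (label_classes f V) ?U \<le> card (label_class f V ` N)"
    unfolding red_degree_def using \<open>finite N\<close> by (simp add: card_mono)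
  also have "\<dots> \<le> card N"
    using \<open>finite N\<close> by (rule card_image_le)
  finally show ?thesis .
qed

section \<open>The staged contraction of \<open>J(n,2)\<close>\<close>

datatype part_label = Core | Star nat | Single nat nat

text \<open>Putting \<open>{1,2}\<close> into the core
  makes stage \<open>(1,n)\<close> coincide with stage \<open>(2,3)\<close>.\<close>

definition stage_label :: "nat \<Rightarrow> nat \<Rightarrow> nat \<Rightarrow> nat \<Rightarrow> part_label" where
  "stage_label k m a b =
    (if b \<le> k \<or> b = 2 then Core
     else if a \<le> k \<or> (a = k + 1 \<and> b \<le> m) then Star b
     else Single a b)"

definition pairs_adjacent :: "nat \<Rightarrow> nat \<Rightarrow> nat \<Rightarrow> nat \<Rightarrow> bool" where
  "pairs_adjacent a b c d \<longleftrightarrow> \<not> (a = c \<and> b = d) \<and> (a = c \<or> a = d \<or> b = c \<or> b = d)"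

fun red_candidates :: "nat \<Rightarrow> nat \<Rightarrow> nat \<Rightarrow> part_label \<Rightarrow> part_label set" where
  "red_candidates n k m Core = Star ` {4..n}"
| "red_candidates n k m (Star x) =
    (if 2 \<le> k \<and> 4 \<le> x then {Core} else {}) \<union> Star ` ({max (k + 1) 3..n} - {x}) \<union>
    (if k + 2 \<le> x \<and> x \<le> m then Single (k + 1) ` {m + 1..n} else {})"
| "red_candidates n k m (Single a b) = (if m < n then Star ` {k + 2..m} else {})"

lemma stage_label_eq_Core_iff:
  "stage_label k m a b = Core \<longleftrightarrow> b \<le> k \<or> b = 2"
  unfolding stage_label_def by auto

lemma stage_label_eq_Star_iff:
  "stage_label k m a b = Star x \<longleftrightarrow>
    \<not> (b \<le> k \<or> b = 2) \<and> (a \<le> k \<or> (a = k + 1 \<and> b \<le> m)) \<and> x = b"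
  unfolding stage_label_def by auto

lemma stage_label_eq_Single_iff:
  "stage_label k m a b = Single c d \<longleftrightarrow>
    \<not> (b \<le> k \<or> b = 2) \<and> \<not> (a \<le> k \<or> (a = k + 1 \<and> b \<le> m)) \<and> c = a \<and> d = b"
  unfolding stage_label_def by auto

context
  fixes n k m a1 b1 a2 b2 c1 d1 c2 d2 :: nat and l0 l :: part_label
  assumes stage: "1 \<le> k" "k < m"
    and pairs: "1 \<le> a1" "a1 < b1" "b1 \<le> n" "1 \<le> a2" "a2 < b2" "b2 \<le> n"
      "1 \<le> c1" "c1 < d1" "d1 \<le> n" "1 \<le> c2" "c2 < d2" "d2 \<le> n"
    and labels: "stage_label k m a1 b1 = l0" "stage_label k m a2 b2 = l0"
      "stage_label k m c1 d1 = l" "stage_label k m c2 d2 = l" "l \<noteq> l0"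
    and red: "pairs_adjacent a1 b1 c1 d1" "\<not> pairs_adjacent a2 b2 c2 d2"
begin

lemma red_from_Core:
  assumes "l0 = Core"
  shows "l \<in> red_candidates n k m l0"
proof -
  have core: "b1 \<le> k \<or> b1 = 2" "b2 \<le> k \<or> b2 = 2"
    using labels assms by (auto simp: stage_label_eq_Core_iff)
  show ?thesis
  proof (cases l)
    case Core
    then show ?thesis using labels assms by simp
  next
    case (Star x)
    then have "d1 = x" "d2 = x" "\<not> (x \<le> k \<or> x = 2)"
      "c1 \<le> k \<or> (c1 = k + 1 \<and> x \<le> m)" "c2 \<le> k \<or> (c2 = k + 1 \<and> x \<le> m)"
      using labels by (auto simp: stage_label_eq_Star_iff)
    then have "4 \<le> x"
      using core stage pairs red unfolding pairs_adjacent_def by (elim disjE; simp; arith)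
    then show ?thesis
      using Star assms \<open>d1 = x\<close> pairs by auto
  next
    case (Single c d)
    then have "c1 = c" "d1 = d" "c2 = c" "d2 = d" "\<not> (d \<le> k \<or> d = 2)"
      "\<not> (c \<le> k \<or> (c = k + 1 \<and> d \<le> m))"
      using labels by (auto simp: stage_label_eq_Single_iff)
    then have False
      using core stage pairs red unfolding pairs_adjacent_def by (elim disjE; simp; arith)
    then show ?thesis ..
  qed
qed

lemma red_from_Star:
  assumes "l0 = Star x"
  shows "l \<in> red_candidates n k m l0"
proof -
  have star: "b1 = x" "b2 = x" "\<not> (x \<le> k \<or> x = 2)"
    "a1 \<le> k \<or> (a1 = k + 1 \<and> x \<le> m)" "a2 \<le> k \<or> (a2 = k + 1 \<and> x \<le> m)"
    using labels assms by (auto simp: stage_label_eq_Star_iff)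
  show ?thesis
  proof (cases l)
    case Core
    then have "d1 \<le> k \<or> d1 = 2" "d2 \<le> k \<or> d2 = 2"
      using labels by (auto simp: stage_label_eq_Core_iff)
    then have "2 \<le> k \<and> 4 \<le> x"
      using star stage pairs red unfolding pairs_adjacent_def by (elim disjE; simp; arith)
    then show ?thesis
      using Core assms by simp
  next
    case (Star y)
    then have "d1 = y" "\<not> (y \<le> k \<or> y = 2)"
      using labels by (auto simp: stage_label_eq_Star_iff)
    then show ?thesis
      using Star assms labels pairs by auto
  next
    case (Single c d)
    then have "c1 = c" "d1 = d" "c2 = c" "d2 = d" "\<not> (d \<le> k \<or> d = 2)"
      "\<not> (c \<le> k \<or> (c = k + 1 \<and> d \<le> m))"
      using labels by (auto simp: stage_label_eq_Single_iff)
    then have "k + 2 \<le> x \<and> x \<le> m \<and> c = k + 1 \<and> m + 1 \<le> d"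
      using star stage pairs red unfolding pairs_adjacent_def by (elim disjE; simp; arith)
    then show ?thesis
      using Single assms \<open>d1 = d\<close> pairs by auto
  qed
qed

lemma red_from_Single:
  assumes "l0 = Single a b"
  shows "l \<in> red_candidates n k m l0"
proof -
  have single: "a1 = a" "b1 = b" "a2 = a" "b2 = b" "\<not> (b \<le> k \<or> b = 2)"
    "\<not> (a \<le> k \<or> (a = k + 1 \<and> b \<le> m))"
    using labels assms by (auto simp: stage_label_eq_Single_iff)
  show ?thesis
  proof (cases l)
    case Core
    then have "d1 \<le> k \<or> d1 = 2" "d2 \<le> k \<or> d2 = 2"
      using labels by (auto simp: stage_label_eq_Core_iff)
    then have False
      using single stage pairs red unfolding pairs_adjacent_def by (elim disjE; simp; arith)
    then show ?thesis ..
  next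
    case (Star x)
    then have "d1 = x" "d2 = x" "\<not> (x \<le> k \<or> x = 2)"
      "c1 \<le> k \<or> (c1 = k + 1 \<and> x \<le> m)" "c2 \<le> k \<or> (c2 = k + 1 \<and> x \<le> m)"
      using labels by (auto simp: stage_label_eq_Star_iff)
    then have "m < n \<and> k + 2 \<le> x \<and> x \<le> m"
      using single stage pairs red unfolding pairs_adjacent_def by (elim disjE; simp; arith)
    then show ?thesis
      using Star assms by auto
  next
    case (Single c d)
    then have False
      using single labels red by (auto simp: stage_label_eq_Single_iff pairs_adjacent_def)
    then show ?thesis ..
  qed
qed

lemma red_label_in_candidates: "l \<in> red_candidates n k m l0"
  using red_from_Core red_from_Star red_from_Single by (cases l0) auto

end

lemma johnson2_vertices_iff:
  "S \<in> johnson2_vertices n \<longleftrightarrow> (\<exists>a b. 1 \<le> a \<and> a < b \<and> b \<le> n \<and> S = {a, b})"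
proof
  assume S: "S \<in> johnson2_vertices n"
  then obtain x y where "S = {x, y}" "x \<noteq> y"
    unfolding johnson2_vertices_def by (auto simp: card_2_iff)
  then have "S = {min x y, max x y}" "min x y < max x y"
    by (auto simp: min_def max_def insert_commute)
  moreover have "1 \<le> min x y" "max x y \<le> n"
    using S \<open>S = {x, y}\<close> unfolding johnson2_vertices_def by (auto simp: min_def max_def)
  ultimately show "\<exists>a b. 1 \<le> a \<and> a < b \<and> b \<le> n \<and> S = {a, b}"
    by blast
qed (auto simp: johnson2_vertices_def)

lemma pair_in_johnson2_vertices:
  "1 \<le> a \<Longrightarrow> a < b \<Longrightarrow> b \<le> n \<Longrightarrow> {a, b} \<in> johnson2_vertices n"
  unfolding johnson2_vertices_iff by blast

lemma finite_johnson2_vertices: "finite (johnson2_vertices n)"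
  by (rule finite_subset[of _ "Pow {1..n}"]) (auto simp: johnson2_vertices_def)

lemma johnson2_adj_iff_pairs_adjacent:
  "a < b \<Longrightarrow> c < d \<Longrightarrow> johnson2_adj {a, b} {c, d} \<longleftrightarrow> pairs_adjacent a b c d"
  unfolding johnson2_adj_def pairs_adjacent_def
  by (cases "a = c"; cases "a = d"; cases "b = c"; cases "b = d") (auto simp: Int_insert_left)

definition vertex_label :: "nat \<Rightarrow> nat \<Rightarrow> nat set \<Rightarrow> part_label" where
  "vertex_label k m S = stage_label k m (Min S) (Max S)"

definition stage_partition :: "nat \<Rightarrow> nat \<Rightarrow> nat \<Rightarrow> nat set set set" where
  "stage_partition n k m = label_classes (vertex_label k m) (johnson2_vertices n)"

lemma vertex_label_pair: "a < b \<Longrightarrow> vertex_label k m {a, b} = stage_label k m a b"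
  unfolding vertex_label_def by simp

lemma card_red_candidates_le:
  assumes "1 \<le> k" "k < m" "3 \<le> n" "1 \<le> a" "a < b" "b \<le> n"
  shows "card (red_candidates n k m (stage_label k m a b)) \<le> 2 * (n - 3)"
proof (cases "stage_label k m a b")
  case Core
  have "card (Star ` {4..n}) \<le> n - 3"
    using card_image_le[of "{4..n}" Star] by simp
  then show ?thesis
    using Core by simp
next
  case (Star x)
  then have "x = b" "\<not> (b \<le> k \<or> b = 2)"
    by (auto simp: stage_label_eq_Star_iff)
  let ?core = "if 2 \<le> k \<and> 4 \<le> x then {Core} else {}"
  let ?stars = "Star ` ({max (k + 1) 3..n} - {x})"
  let ?singles = "if k + 2 \<le> x \<and> x \<le> m then Single (k + 1) ` {m + 1..n} else {}"
  have "card ?core \<le> (if 2 \<le> k \<and> 4 \<le> x then 1 else 0)"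
    by simp
  moreover have "card ?stars \<le> n - max (k + 1) 3"
  proof -
    have "card ?stars \<le> card ({max (k + 1) 3..n} - {x})"
      by (rule card_image_le) simp
    also have "\<dots> = n - max (k + 1) 3"
      using \<open>x = b\<close> \<open>\<not> (b \<le> k \<or> b = 2)\<close> assms by (subst card_Diff_singleton) auto
    finally show ?thesis .
  qed
  moreover have "card ?singles \<le> (if k + 2 \<le> x \<and> x \<le> m then n - m else 0)"
    using card_image_le[of "{m + 1..n}" "Single (k + 1)"] by simp
  moreover have "card (?core \<union> ?stars \<union> ?singles) \<le> card ?core + card ?stars + card ?singles"
    by (meson add_mono card_Un_le le_trans order_refl)
  ultimately show ?thesis
    using Star \<open>x = b\<close> \<open>\<not> (b \<le> k \<or> b = 2)\<close> assms by (auto split: if_splits)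
next
  case (Single c d)
  have "card (Star ` {k + 2..m}) \<le> m - k - 1"
    using card_image_le[of "{k + 2..m}" Star] by simp
  then show ?thesis
    using Single assms by auto
qed

lemma max_red_degree_le_stage_partition:
  assumes "1 \<le> k" "k < m" "3 \<le> n"
  shows "max_red_degree_le johnson2_adj (stage_partition n k m) (2 * (n - 3))"
  unfolding max_red_degree_le_def
proof
  let ?f = "vertex_label k m" and ?V = "johnson2_vertices n"
  fix U assume "U \<in> stage_partition n k m"
  then obtain S where "S \<in> ?V" and "U = label_class ?f ?V (?f S)"
    unfolding stage_partition_def label_classes_def by auto
  then obtain a0 b0 where ab0: "1 \<le> a0" "a0 < b0" "b0 \<le> n"
    and U: "U = label_class ?f ?V (stage_label k m a0 b0)"
    unfolding johnson2_vertices_iff by (auto simp: vertex_label_pair)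
  have "red_degree johnson2_adj (stage_partition n k m) U
      \<le> card (red_candidates n k m (stage_label k m a0 b0))"
    unfolding stage_partition_def U
  proof (rule red_degree_label_class_le)
    show "finite (red_candidates n k m (stage_label k m a0 b0))"
      by (cases "stage_label k m a0 b0") auto
  next
    fix u u' w w'
    assume "u \<in> ?V" "u' \<in> ?V" "w \<in> ?V" "w' \<in> ?V"
      and labels: "?f u = stage_label k m a0 b0" "?f u' = stage_label k m a0 b0" "?f w' = ?f w"
        "?f w \<noteq> stage_label k m a0 b0"
      and "johnson2_adj u w" "\<not> johnson2_adj u' w'"
    then obtain a1 b1 a2 b2 c1 d1 c2 d2 where
      "1 \<le> a1" "a1 < b1" "b1 \<le> n" "u = {a1, b1}" "1 \<le> a2" "a2 < b2" "b2 \<le> n" "u' = {a2, b2}"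
      "1 \<le> c1" "c1 < d1" "d1 \<le> n" "w = {c1, d1}" "1 \<le> c2" "c2 < d2" "d2 \<le> n" "w' = {c2, d2}"
      unfolding johnson2_vertices_iff by metis
    with labels \<open>johnson2_adj u w\<close> \<open>\<not> johnson2_adj u' w'\<close> assms
    show "?f w \<in> red_candidates n k m (stage_label k m a0 b0)"
      using red_label_in_candidates[of k m a1 b1 n a2 b2 c1 d1 c2 d2]
      by (simp add: vertex_label_pair johnson2_adj_iff_pairs_adjacent)
  qed
  also have "\<dots> \<le> 2 * (n - 3)"
    using card_red_candidates_le assms ab0 by blast
  finally show "red_degree johnson2_adj (stage_partition n k m) U \<le> 2 * (n - 3)" .
qed

lemma bounded_merge_next_stage:
  assumes "1 \<le> k" "k < m" "m < n"
  shows "bounded_merge johnson2_adj (2 * (n - 3)) (stage_partition n k m) (stage_partition n k (m + 1))"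
  unfolding bounded_merge_def
proof
  let ?V = "johnson2_vertices n"
  have "Single (k + 1) (m + 1) \<in> vertex_label k m ` ?V"
    using assms pair_in_johnson2_vertices[of "k + 1" "m + 1" n]
    by (intro image_eqI[of _ _ "{k + 1, m + 1}"]) (auto simp: vertex_label_pair stage_label_def)
  moreover have "Star (m + 1) \<in> vertex_label k m ` ?V"
    using assms pair_in_johnson2_vertices[of 1 "m + 1" n]
    by (intro image_eqI[of _ _ "{1, m + 1}"]) (auto simp: vertex_label_pair stage_label_def)
  moreover have "vertex_label k (m + 1) S =
      (if vertex_label k m S = Single (k + 1) (m + 1) then Star (m + 1) else vertex_label k m S)"
    if "S \<in> ?V" for S
    using that unfolding johnson2_vertices_iff
    by (auto simp: vertex_label_pair stage_label_def split: if_splits)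
  ultimately show "merge_step (stage_partition n k m) (stage_partition n k (m + 1))"
    unfolding stage_partition_def by (intro merge_step_relabel) auto
  show "max_red_degree_le johnson2_adj (stage_partition n k (m + 1)) (2 * (n - 3))"
    using assms by (intro max_red_degree_le_stage_partition) auto
qed

lemma bounded_merge_next_phase:
  assumes "2 \<le> k" "k < n"
  shows "bounded_merge johnson2_adj (2 * (n - 3)) (stage_partition n k n)
    (stage_partition n (k + 1) (k + 2))"
  unfolding bounded_merge_def
proof
  let ?V = "johnson2_vertices n"
  have "Star (k + 1) \<in> vertex_label k n ` ?V"
    using assms pair_in_johnson2_vertices[of 1 "k + 1" n]
    by (intro image_eqI[of _ _ "{1, k + 1}"]) (auto simp: vertex_label_pair stage_label_def)
  moreover have "Core \<in> vertex_label k n ` ?V"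
    using assms pair_in_johnson2_vertices[of 1 2 n]
    by (intro image_eqI[of _ _ "{1, 2}"]) (auto simp: vertex_label_pair stage_label_def)
  moreover have "vertex_label (k + 1) (k + 2) S =
      (if vertex_label k n S = Star (k + 1) then Core else vertex_label k n S)"
    if "S \<in> ?V" for S
    using that assms unfolding johnson2_vertices_iff
    by (auto simp: vertex_label_pair stage_label_def split: if_splits)
  ultimately show "merge_step (stage_partition n k n) (stage_partition n (k + 1) (k + 2))"
    unfolding stage_partition_def by (intro merge_step_relabel) auto
  show "max_red_degree_le johnson2_adj (stage_partition n (k + 1) (k + 2)) (2 * (n - 3))"
    using assms by (intro max_red_degree_le_stage_partition) auto
qed

lemma stage_partition_first: "stage_partition n 1 2 = singleton_partition (johnson2_vertices n)"
  unfolding stage_partition_def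
proof (rule label_classes_inj_on, rule inj_onI)
  fix S T assume "S \<in> johnson2_vertices n" "T \<in> johnson2_vertices n"
    and "vertex_label 1 2 S = vertex_label 1 2 T"
  then show "S = T"
    unfolding johnson2_vertices_iff
    by (auto simp: vertex_label_pair stage_label_def split: if_splits)
qed

lemma stage_partition_end_of_first_phase: "3 \<le> n \<Longrightarrow> stage_partition n 1 n = stage_partition n 2 3"
  unfolding stage_partition_def
  by (rule label_classes_cong) (auto simp: johnson2_vertices_iff vertex_label_pair stage_label_def)

lemma stage_partition_last: "2 \<le> n \<Longrightarrow> stage_partition n n (n + 1) = {johnson2_vertices n}"
  unfolding stage_partition_def
proof (rule label_classes_const)
  show "johnson2_vertices n \<noteq> {}" if "2 \<le> n"
    using that pair_in_johnson2_vertices[of 1 2 n] by auto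
  show "vertex_label n (n + 1) S = Core" if "S \<in> johnson2_vertices n" for S
    using that unfolding johnson2_vertices_iff
    by (auto simp: vertex_label_pair stage_label_def split: if_splits)
qed

lemma bounded_merges_within_phase:
  assumes "1 \<le> k" "k < m" "m \<le> n"
  shows "(bounded_merge johnson2_adj (2 * (n - 3)))\<^sup>*\<^sup>* (stage_partition n k m) (stage_partition n k n)"
  using assms(3,2)
proof (induction m rule: inc_induct)
  case (step m)
  then show ?case
    using bounded_merge_next_stage[of k m n] assms(1)
    by (simp add: converse_rtranclp_into_rtranclp)
qed simp

lemma bounded_merges_to_phase:
  assumes "3 \<le> n" "2 \<le> k" "k \<le> n"
  shows "(bounded_merge johnson2_adj (2 * (n - 3)))\<^sup>*\<^sup>* (stage_partition n 1 2) (stage_partition n k (k + 1))"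
  using assms(2,3)
proof (induction k rule: dec_induct)
  case base
  then show ?case
    using bounded_merges_within_phase[of 1 2 n] stage_partition_end_of_first_phase assms(1)
    by simp
next
  case (step k)
  then show ?case
    using bounded_merges_within_phase[of k "k + 1" n] bounded_merge_next_phase[of k n]
    by (auto intro: rtranclp_trans)
qed

theorem mainTheorem18:
  fixes n :: nat
  assumes "n \<ge> 3"
  shows "twin_width (johnson2_vertices n) johnson2_adj \<le> 2 * (n - 3)"
proof (rule twin_width_le_if_bounded_merges)
  show "finite (johnson2_vertices n)"
    by (rule finite_johnson2_vertices)
  show "(bounded_merge johnson2_adj (2 * (n - 3)))\<^sup>*\<^sup>* (singleton_partition (johnson2_vertices n))
      {johnson2_vertices n}"
    using bounded_merges_to_phase[of n n] stage_partition_first[of n] stage_partition_last[of n] assms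
    by simp
qed

end
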